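(* Let $c>0$, $T>0$ and $\Delta_1,\dots,\Delta_K>0$. Let $\Phi_c=\sup\{x\in\mathbb{R}:\sum_{i=1}^K\max\{\frac{x-\ln\Delta_i^{-1}}{c\Delta_i^2/2},0\}\le T\}$. Then the vector $(x_1,\dots,x_K)$ with \[ x_i=\max\Big\{\frac{\Phi_c-\ln\Delta_i^{-1}}{c\Delta_i^2/2},\,0\Big\} \] is an optimal solution of the program $\mathscr{P}_c(\{\Delta_i\}_{i=1}^K,T)$.
   Context: For $c>0$, $T\ge0$ and positive reals $\Delta_1,\dots,\Delta_K$, the program $\mathscr{P}_c(\{\Delta_i\}_{i=1}^K,T)$ is: minimize $\sum_{i=1}^K\exp(-c x_i\Delta_i^2)$ subject to $x_1+\dots+x_K=T$, $x_i\ge0$; its optimal value is also denoted $\mathscr{P}_c(\{\Delta_i\}_{i=1}^K,T)$. *)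

theory Defs
  imports Complex_Main
begin

definition P_feasible :: "nat \<Rightarrow> real \<Rightarrow> (nat \<Rightarrow> real) \<Rightarrow> bool" where
  "P_feasible K T x \<longleftrightarrow> (\<forall>i\<in>{1..K}. 0 \<le> x i) \<and> (\<Sum>i=1..K. x i) = T"

definition P_obj :: "real \<Rightarrow> (nat \<Rightarrow> real) \<Rightarrow> nat \<Rightarrow> (nat \<Rightarrow> real) \<Rightarrow> real" where
  "P_obj c \<Delta> K x = (\<Sum>i=1..K. exp (- c * x i * (\<Delta> i)\<^sup>2))"

definition P_optimal :: "real \<Rightarrow> (nat \<Rightarrow> real) \<Rightarrow> nat \<Rightarrow> real \<Rightarrow> (nat \<Rightarrow> real) \<Rightarrow> bool" where
  "P_optimal c \<Delta> K T x \<longleftrightarrow> P_feasible K T x \<and>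
     (\<forall>y. P_feasible K T y \<longrightarrow> P_obj c \<Delta> K x \<le> P_obj c \<Delta> K y)"

end

theory Submission
  imports Defs
begin

text \<open>Water-filling: the optimal allocation pours the budget T into the coordinates whose
  marginal cost c exp(-c x \<Delta>^2) \<Delta>^2 is largest, until all active coordinates share a common
  marginal cost c exp(-2\<Phi>). The water level \<Phi> exists and exhausts the budget because the
  total allocation is a continuous nondecreasing function of the level, zero for low levels,
  unbounded for high ones and strictly increasing once positive. Optimality is then the
  Lagrangian argument: each summand lies above its tangent line of slope -c exp(-2\<Phi>) at the
  allocated point (for an inactive coordinate the slope there is even steeper), and summing
  these tangent bounds over any feasible allocation with the same total gives the claim.\<close>

definition water_fill :: "'i set \<Rightarrow> ('i \<Rightarrow> real) \<Rightarrow> ('i \<Rightarrow> real) \<Rightarrow> real \<Rightarrow> real" where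
  "water_fill I a b y = (\<Sum>i\<in>I. max ((y - a i) / b i) 0)"

lemma water_fill_mono:
  assumes "\<And>i. i \<in> I \<Longrightarrow> b i > 0" and "y \<le> z"
  shows "water_fill I a b y \<le> water_fill I a b z"
  unfolding water_fill_def
  by (intro sum_mono max.mono divide_right_mono) (use assms in \<open>auto simp: less_imp_le\<close>)

lemma continuous_on_water_fill:
  assumes "\<And>i. i \<in> I \<Longrightarrow> b i > 0"
  shows "continuous_on S (water_fill I a b)"
  unfolding water_fill_def by (intro continuous_intros) (use assms in force)

lemma water_fill_strict_mono_above_zero:
  assumes "finite I" and b: "\<And>i. i \<in> I \<Longrightarrow> b i > 0"
    and "water_fill I a b y > 0" and "y < z"
  shows "water_fill I a b y < water_fill I a b z"
proof -
  obtain i where i: "i \<in> I" and active: "max ((y - a i) / b i) 0 \<noteq> 0"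
    using assms(3) unfolding water_fill_def by (metis (no_types, lifting) less_irrefl sum.neutral)
  have "a i < y"
  proof (rule ccontr)
    assume "\<not> a i < y"
    then have "(y - a i) / b i \<le> 0" using b[OF i] by (simp add: divide_nonpos_pos)
    with active show False by simp
  qed
  have "(y - a i) / b i < (z - a i) / b i"
    using \<open>y < z\<close> b[OF i] by (simp add: divide_strict_right_mono)
  moreover have "0 < (z - a i) / b i" using \<open>a i < y\<close> \<open>y < z\<close> b[OF i] by simp
  ultimately have "max ((y - a i) / b i) 0 < max ((z - a i) / b i) 0" by simp
  moreover have "max ((y - a j) / b j) 0 \<le> max ((z - a j) / b j) 0" if "j \<in> I" for j
    using \<open>y < z\<close> b[OF that] by (intro max.mono divide_right_mono) auto
  ultimately show ?thesis
    unfolding water_fill_def using \<open>finite I\<close> i by (intro sum_strict_mono_ex1) blast+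
qed

lemma water_fill_Min_eq_0:
  assumes "finite I" and b: "\<And>i. i \<in> I \<Longrightarrow> b i > 0"
  shows "water_fill I a b (Min (a ` I)) = 0"
  unfolding water_fill_def
proof (rule sum.neutral, intro ballI)
  fix i assume i: "i \<in> I"
  have "Min (a ` I) \<le> a i" using \<open>finite I\<close> i by (intro Min_le) auto
  then show "max ((Min (a ` I) - a i) / b i) 0 = 0" using b[OF i] by (simp add: divide_nonpos_pos)
qed

lemma water_fill_ge_budget:
  assumes "finite I" and i: "i \<in> I" and b: "\<And>i. i \<in> I \<Longrightarrow> b i > 0"
  shows "T \<le> water_fill I a b (a i + b i * T)"
proof -
  have "max ((a i + b i * T - a i) / b i) 0 \<le> water_fill I a b (a i + b i * T)"
    unfolding water_fill_def using \<open>finite I\<close> i by (intro member_le_sum) auto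
  then show ?thesis using b[OF i] by simp
qed

lemma water_fill_Sup_level:
  assumes "finite I" and "I \<noteq> {}" and b: "\<And>i. i \<in> I \<Longrightarrow> b i > 0" and "T > 0"
  shows "water_fill I a b (Sup {y. water_fill I a b y \<le> T}) = T"
proof -
  let ?g = "water_fill I a b"
  obtain i where i: "i \<in> I" using \<open>I \<noteq> {}\<close> by blast
  define lo where "lo = Min (a ` I)"
  define hi where "hi = a i + b i * T"
  have g_lo: "?g lo = 0" and g_hi: "T \<le> ?g hi"
    unfolding lo_def hi_def using assms i by (auto intro: water_fill_Min_eq_0 water_fill_ge_budget)
  have "lo \<le> hi"
  proof (rule ccontr)
    assume "\<not> lo \<le> hi"
    then have "?g hi \<le> ?g lo" by (intro water_fill_mono b) auto
    then show False using g_lo g_hi \<open>T > 0\<close> by simp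
  qed
  then obtain y0 where y0: "?g y0 = T"
    using IVT'[of ?g lo T hi] g_lo g_hi \<open>T > 0\<close> continuous_on_water_fill[of I b] b by auto
  have "{y. ?g y \<le> T} = {..y0}"
  proof (intro set_eqI iffI)
    fix y assume "y \<in> {y. ?g y \<le> T}"
    then show "y \<in> {..y0}"
      using water_fill_strict_mono_above_zero[of I b a y0 y] \<open>finite I\<close> b y0 \<open>T > 0\<close>
      by (cases "y \<le> y0") auto
  next
    fix y assume "y \<in> {..y0}"
    then have "?g y \<le> ?g y0" by (intro water_fill_mono b) auto
    then show "y \<in> {y. ?g y \<le> T}" using y0 by simp
  qed
  then show ?thesis using y0 by simp
qed

lemma exp_ge_tangent: "exp v * (1 + u - v) \<le> exp (u::real)"
proof -
  have "exp v * (1 + (u - v)) \<le> exp v * exp (u - v)"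
    by (intro mult_left_mono exp_ge_add_one_self) simp
  then show ?thesis by (simp add: exp_diff algebra_simps)
qed

text \<open>At an active point x > 0 the tangent slope -c d^2 exp(-c x d^2) equals -c exp(-2P);
  at an inactive point x = 0 the slope -c d^2 is at least as steep, because inactivity means
  d^2 \<le> exp(-2P).\<close>

lemma exp_decay_ge_tangent_at_water_level:
  fixes c d P y :: real
  assumes c: "c > 0" and d: "d > 0" and y: "y \<ge> 0"
  defines "x \<equiv> max ((P - ln (inverse d)) / (c * d\<^sup>2 / 2)) 0"
  shows "exp (- c * x * d\<^sup>2) - c * exp (-2 * P) * (y - x) \<le> exp (- c * y * d\<^sup>2)"
proof -
  have tangent: "exp (- c * x * d\<^sup>2) - exp (- c * x * d\<^sup>2) * (c * d\<^sup>2) * (y - x)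
      \<le> exp (- c * y * d\<^sup>2)"
    using exp_ge_tangent[of "- c * x * d\<^sup>2" "- c * y * d\<^sup>2"] by (simp add: algebra_simps)
  have ln_inv: "ln (inverse d) = - ln d" using d by (simp add: ln_inverse)
  have exp_ln: "exp (2 * ln d) = d\<^sup>2"
    using d by (simp only: mult_2 exp_add exp_ln power2_eq_square)
  show ?thesis
  proof (cases "P + ln d > 0")
    case True
    then have "x = (P + ln d) / (c * d\<^sup>2 / 2)"
      using c d by (simp add: x_def ln_inv)
    then have "- c * x * d\<^sup>2 = -2 * P - 2 * ln d"
      using c d by (simp add: field_simps)
    then have "exp (- c * x * d\<^sup>2) = exp (-2 * P) / d\<^sup>2"
      by (simp only: exp_diff exp_ln)
    then have slope: "exp (- c * x * d\<^sup>2) * (c * d\<^sup>2) = c * exp (-2 * P)"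
      using d by simp
    show ?thesis using tangent unfolding slope .
  next
    case False
    then have x0: "x = 0"
      using c d by (simp add: x_def ln_inv divide_nonpos_pos)
    from False have "exp (2 * ln d) \<le> exp (-2 * P)" by simp
    then have "d\<^sup>2 \<le> exp (-2 * P)" using exp_ln by simp
    then have "c * d\<^sup>2 * y \<le> c * exp (-2 * P) * y" using c y by (simp add: mult_right_mono)
    then show ?thesis using tangent x0 by simp
  qed
qed

lemma sum_le_sum_of_common_supporting_slope:
  fixes f :: "'i \<Rightarrow> real \<Rightarrow> real" and x y :: "'i \<Rightarrow> real"
  assumes "\<And>i. i \<in> I \<Longrightarrow> f i (x i) - s * (y i - x i) \<le> f i (y i)"
    and "(\<Sum>i\<in>I. y i) = (\<Sum>i\<in>I. x i)"
  shows "(\<Sum>i\<in>I. f i (x i)) \<le> (\<Sum>i\<in>I. f i (y i))"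
proof -
  have "(\<Sum>i\<in>I. f i (x i)) = (\<Sum>i\<in>I. f i (x i) - s * (y i - x i))"
    using assms(2) by (simp add: sum_subtractf sum_distrib_left[symmetric])
  also have "\<dots> \<le> (\<Sum>i\<in>I. f i (y i))" using assms(1) by (rule sum_mono)
  finally show ?thesis .
qed

theorem lemma3:
  fixes c T :: real and K :: nat and \<Delta> :: "nat \<Rightarrow> real"
  assumes "c > 0" and "T > 0" and "K \<ge> 1"
    and "\<And>i. i \<in> {1..K} \<Longrightarrow> \<Delta> i > 0"
  defines "\<Phi> \<equiv> Sup {y::real. (\<Sum>i=1..K. max ((y - ln (inverse (\<Delta> i))) / (c * (\<Delta> i)\<^sup>2 / 2)) 0) \<le> T}"
  shows "P_optimal c \<Delta> K T (\<lambda>i. max ((\<Phi> - ln (inverse (\<Delta> i))) / (c * (\<Delta> i)\<^sup>2 / 2)) 0)"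
    (is "P_optimal c \<Delta> K T ?x")
proof -
  let ?a = "\<lambda>i. ln (inverse (\<Delta> i))" and ?b = "\<lambda>i. c * (\<Delta> i)\<^sup>2 / 2"
  have "?b i > 0" if "i \<in> {1..K}" for i using assms(1) assms(4)[OF that] by simp
  then have "water_fill {1..K} ?a ?b \<Phi> = T"
    unfolding \<Phi>_def water_fill_def[symmetric]
    using assms(2,3) by (intro water_fill_Sup_level) auto
  then have sum_x: "(\<Sum>i=1..K. ?x i) = T" by (simp add: water_fill_def)
  then have feasible: "P_feasible K T ?x" by (simp add: P_feasible_def)
  have "P_obj c \<Delta> K ?x \<le> P_obj c \<Delta> K y" if "P_feasible K T y" for y
    unfolding P_obj_def
  proof (rule sum_le_sum_of_common_supporting_slope
      [where f = "\<lambda>i t. exp (- c * t * (\<Delta> i)\<^sup>2)" and x = ?x and s = "c * exp (-2 * \<Phi>)"])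
    show "(\<Sum>i=1..K. y i) = (\<Sum>i=1..K. ?x i)" using that sum_x by (simp add: P_feasible_def)
  qed (use that assms(1,4) exp_decay_ge_tangent_at_water_level in \<open>simp add: P_feasible_def\<close>)
  with feasible show ?thesis by (simp add: P_optimal_def)
qed

end
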